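(* In the game $\mathcal{B}_0(120,6)$, every pure strategy $s\in S$ that allocates a positive number of units to at most two battlefields (i.e. $|\{k:s_k>0\}|\le 2$) is not used with positive probability in any Nash equilibrium.
   Context: Fix integers $N\ge1$, $K\ge2$ and a real number $\alpha$. The Colonel Blotto game $\mathcal{B}_\alpha(N,K)$ is the two-player simultaneous-move game with players $A,B$, each with pure strategy set $S=\{s\in\{0,1,\ldots,N\}^K:\sum_{k=1}^K s_k=N\}$, in which the payoff of player $i$ at the pure profile $(s^i,s^{-i})$ is $\pi^i(s^i,s^{-i})=\sum_{k=1}^K\big(\mathbf 1[s^i_k>s^{-i}_k]+\tfrac{\alpha}{2}\mathbf 1[s^i_k=s^{-i}_k]\big)$. Mixed strategies are probability distributions on $S$, with expected payoffs under independent randomization; a Nash equilibrium is a mixed profile from which no unilateral deviation raises a player's expected payoff. *)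

theory Defs
  imports Complex_Main
begin

definition blotto_S :: "nat \<Rightarrow> nat \<Rightarrow> (nat \<Rightarrow> nat) set" where
  "blotto_S N K = {s. (\<forall>k\<ge>K. s k = 0) \<and> (\<Sum>k<K. s k) = N}"

definition blotto_payoff :: "real \<Rightarrow> nat \<Rightarrow> (nat \<Rightarrow> nat) \<Rightarrow> (nat \<Rightarrow> nat) \<Rightarrow> real" where
  "blotto_payoff \<alpha> K s t =
     (\<Sum>k<K. (if s k > t k then 1 else 0) + \<alpha> / 2 * (if s k = t k then 1 else 0))"

definition mixed_strategy :: "nat \<Rightarrow> nat \<Rightarrow> ((nat \<Rightarrow> nat) \<Rightarrow> real) \<Rightarrow> bool" where
  "mixed_strategy N K p \<longleftrightarrow>
     (\<forall>s. s \<notin> blotto_S N K \<longrightarrow> p s = 0) \<and>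
     (\<forall>s. p s \<ge> 0) \<and> (\<Sum>s\<in>blotto_S N K. p s) = 1"

definition expected_payoff ::
  "real \<Rightarrow> nat \<Rightarrow> nat \<Rightarrow> ((nat \<Rightarrow> nat) \<Rightarrow> real) \<Rightarrow> ((nat \<Rightarrow> nat) \<Rightarrow> real) \<Rightarrow> real" where
  "expected_payoff \<alpha> N K p q =
     (\<Sum>s\<in>blotto_S N K. \<Sum>t\<in>blotto_S N K. p s * q t * blotto_payoff \<alpha> K s t)"

definition nash_eq ::
  "real \<Rightarrow> nat \<Rightarrow> nat \<Rightarrow> ((nat \<Rightarrow> nat) \<Rightarrow> real) \<Rightarrow> ((nat \<Rightarrow> nat) \<Rightarrow> real) \<Rightarrow> bool" where
  "nash_eq \<alpha> N K pA pB \<longleftrightarrow>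
     mixed_strategy N K pA \<and> mixed_strategy N K pB \<and>
     (\<forall>p'. mixed_strategy N K p' \<longrightarrow>
        expected_payoff \<alpha> N K p' pB \<le> expected_payoff \<alpha> N K pA pB) \<and>
     (\<forall>q'. mixed_strategy N K q' \<longrightarrow>
        expected_payoff \<alpha> N K q' pA \<le> expected_payoff \<alpha> N K pB pA)"

end

theory Submission
  imports Defs "HOL-Number_Theory.Cong"
begin

(* With worthless ties (alpha = 0), a pure strategy putting units on at most two battlefields
   wins at most two battlefields, whatever the opponent does. Against this, take the K cyclic
   shifts of the staircase (0, c, 2c, ..., (K - 1) c), where c K (K - 1) / 2 = N (for
   B_0(120, 6): c = 8). An opponent with t_k units on battlefield k loses it to every shift
   placing more than t_k there, and at least K - 1 - t_k / c shifts do; summing over k, the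
   shifts together win at least K (K - 1) - N / c = K (K - 1) / 2 battlefields. Their uniform
   mixture thus earns at least (K - 1) / 2 = 5/2 > 2 against every pure strategy, so the
   strategy is strictly dominated, and a strictly dominated pure strategy gets no weight in
   a best response: moving that weight onto the dominating mixture would pay strictly more. *)

lemma finite_blotto_S: "finite (blotto_S N K)"
proof (rule finite_subset)
  show "blotto_S N K \<subseteq>
      {s. \<forall>k. (k \<in> {..<K} \<longrightarrow> s k \<in> {..N}) \<and> (k \<notin> {..<K} \<longrightarrow> s k = 0)}"
    unfolding blotto_S_def by (auto intro: member_le_sum[of _ "{..<K}", simplified])
qed (intro finite_set_of_finite_funs; simp)

lemma blotto_payoff_zero: "blotto_payoff 0 K s t = (\<Sum>k<K. of_bool (t k < s k))"
  unfolding blotto_payoff_def of_bool_def by simp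

lemma blotto_payoff_zero_le_card_support:
  "blotto_payoff 0 K s t \<le> card {k. k < K \<and> 0 < s k}"
proof -
  have "blotto_payoff 0 K s t \<le> (\<Sum>k<K. of_bool (0 < s k))"
    unfolding blotto_payoff_zero by (intro sum_mono) auto
  also have "\<dots> = card {k. k < K \<and> 0 < s k}"
    by (simp add: Collect_conj_eq lessThan_def)
  finally show ?thesis .
qed

lemma sum_mod_shift:
  fixes f :: "nat \<Rightarrow> 'a::comm_monoid_add"
  shows "(\<Sum>r<K. f ((k + r) mod K)) = (\<Sum>m<K. f m)"
proof (cases "K = 0")
  case False
  have "inj_on (\<lambda>r. (k + r) mod K) {..<K}"
    by (auto simp: inj_on_def cong_add_lcancel_nat cong_less_modulus_unique_nat
        simp flip: cong_def)
  moreover have "(\<lambda>r. (k + r) mod K) ` {..<K} = {..<K}"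
    using False calculation by (intro endo_inj_surj) auto
  ultimately show ?thesis
    using sum.reindex[of "\<lambda>r. (k + r) mod K" "{..<K}" f] by simp
qed simp

lemma card_exceeding_multiples:
  assumes "0 < c"
  shows "real K - 1 - real x / real c \<le> card {m. m < K \<and> x < c * m}"
proof -
  have "{x div c <..< K} \<subseteq> {m. m < K \<and> x < c * m}"
    using assms by (auto simp: div_less_iff_less_mult mult.commute)
  then have "card {x div c <..< K} \<le> card {m. m < K \<and> x < c * m}"
    by (intro card_mono) auto
  then have "K - Suc (x div c) \<le> card {m. m < K \<and> x < c * m}"
    by simp
  moreover have "real (x div c) \<le> real x / real c"
    by (rule of_nat_div_le_of_nat)
  ultimately show ?thesis
    by linarith
qed

lemma sum_move_weight:
  fixes p \<sigma> f :: "'a \<Rightarrow> real"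
  assumes "finite S" "s \<in> S"
  shows "(\<Sum>x\<in>S. (p x + p s * (\<sigma> x - of_bool (x = s))) * f x)
    = (\<Sum>x\<in>S. p x * f x) + p s * ((\<Sum>x\<in>S. \<sigma> x * f x) - f s)"
proof -
  have "(\<Sum>x\<in>S. (p x + p s * (\<sigma> x - of_bool (x = s))) * f x)
      = (\<Sum>x\<in>S. p x * f x + p s * (\<sigma> x * f x) - p s * (if x = s then f x else 0))"
    by (intro sum.cong refl) (simp add: algebra_simps)
  also have "\<dots> = (\<Sum>x\<in>S. p x * f x) + p s * (\<Sum>x\<in>S. \<sigma> x * f x)
      - p s * (\<Sum>x\<in>S. if x = s then f x else 0)"
    by (simp add: sum.distrib sum_subtractf sum_distrib_left)
  also have "(\<Sum>x\<in>S. if x = s then f x else 0) = f s"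
    using assms by simp
  finally show ?thesis
    by (simp add: algebra_simps)
qed

definition payoff_against_mixed ::
  "real \<Rightarrow> nat \<Rightarrow> nat \<Rightarrow> (nat \<Rightarrow> nat) \<Rightarrow> ((nat \<Rightarrow> nat) \<Rightarrow> real) \<Rightarrow> real" where
  "payoff_against_mixed \<alpha> N K s q = (\<Sum>t\<in>blotto_S N K. q t * blotto_payoff \<alpha> K s t)"

lemma expected_payoff_eq_sum_payoff_against_mixed:
  "expected_payoff \<alpha> N K p q = (\<Sum>s\<in>blotto_S N K. p s * payoff_against_mixed \<alpha> N K s q)"
  unfolding expected_payoff_def payoff_against_mixed_def
  by (simp add: sum_distrib_left mult.assoc)

lemma mixed_strategy_ex_pos:
  assumes "mixed_strategy N K q"
  obtains t where "t \<in> blotto_S N K" "0 < q t"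
  using assms unfolding mixed_strategy_def
  by (metis less_eq_real_def sum.neutral zero_neq_one)

lemma payoff_against_mixed_dominated:
  assumes q: "mixed_strategy N K q"
    and dominated: "\<And>t. t \<in> blotto_S N K \<Longrightarrow>
        blotto_payoff \<alpha> K s t < (\<Sum>x\<in>blotto_S N K. \<sigma> x * blotto_payoff \<alpha> K x t)"
  shows "payoff_against_mixed \<alpha> N K s q
    < (\<Sum>x\<in>blotto_S N K. \<sigma> x * payoff_against_mixed \<alpha> N K x q)"
proof -
  let ?S = "blotto_S N K"
  obtain t where t: "t \<in> ?S" "0 < q t"
    using q by (rule mixed_strategy_ex_pos)
  have "q u * blotto_payoff \<alpha> K s u \<le> q u * (\<Sum>x\<in>?S. \<sigma> x * blotto_payoff \<alpha> K x u)"
    if "u \<in> ?S" for u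
    using dominated[OF that] q unfolding mixed_strategy_def by (simp add: mult_left_mono)
  moreover have "q t * blotto_payoff \<alpha> K s t < q t * (\<Sum>x\<in>?S. \<sigma> x * blotto_payoff \<alpha> K x t)"
    using dominated[OF t(1)] t(2) by simp
  ultimately have "(\<Sum>t\<in>?S. q t * blotto_payoff \<alpha> K s t)
      < (\<Sum>t\<in>?S. q t * (\<Sum>x\<in>?S. \<sigma> x * blotto_payoff \<alpha> K x t))"
    using finite_blotto_S t(1) by (intro sum_strict_mono_ex1) auto
  also have "\<dots> = (\<Sum>x\<in>?S. \<sigma> x * payoff_against_mixed \<alpha> N K x q)"
    unfolding payoff_against_mixed_def sum_distrib_left
    by (subst sum.swap) (simp add: mult.left_commute)
  finally show ?thesis
    unfolding payoff_against_mixed_def .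
qed

lemma best_response_avoids_strictly_dominated:
  assumes p: "mixed_strategy N K p" and q: "mixed_strategy N K q"
    and \<sigma>: "mixed_strategy N K \<sigma>"
    and best: "\<forall>p'. mixed_strategy N K p' \<longrightarrow>
        expected_payoff \<alpha> N K p' q \<le> expected_payoff \<alpha> N K p q"
    and s: "s \<in> blotto_S N K"
    and dominated: "\<And>t. t \<in> blotto_S N K \<Longrightarrow>
        blotto_payoff \<alpha> K s t < (\<Sum>x\<in>blotto_S N K. \<sigma> x * blotto_payoff \<alpha> K x t)"
  shows "p s = 0"
proof -
  let ?S = "blotto_S N K" and ?G = "\<lambda>x. payoff_against_mixed \<alpha> N K x q"
  define p' where "p' x = p x + p s * (\<sigma> x - of_bool (x = s))" for x
  note move = sum_move_weight[OF finite_blotto_S s, of p \<sigma>, folded p'_def]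
  have "mixed_strategy N K p'"
    using p \<sigma> s move[of "\<lambda>_. 1"] unfolding mixed_strategy_def
    by (auto simp: p'_def algebra_simps)
  then have "expected_payoff \<alpha> N K p' q \<le> expected_payoff \<alpha> N K p q"
    using best by blast
  then have "p s * ((\<Sum>x\<in>?S. \<sigma> x * ?G x) - ?G s) \<le> 0"
    unfolding expected_payoff_eq_sum_payoff_against_mixed move by simp
  moreover have "?G s < (\<Sum>x\<in>?S. \<sigma> x * ?G x)"
    using q dominated by (rule payoff_against_mixed_dominated)
  ultimately have "p s \<le> 0"
    by (simp add: mult_le_0_iff)
  then show ?thesis
    using p unfolding mixed_strategy_def by (simp add: order_antisym)
qed

definition uniform_strategy :: "'a set \<Rightarrow> 'a \<Rightarrow> real" where
  "uniform_strategy A x = of_bool (x \<in> A) / card A"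

lemma sum_uniform_strategy:
  assumes "finite S" "A \<subseteq> S"
  shows "(\<Sum>x\<in>S. uniform_strategy A x * f x) = (\<Sum>x\<in>A. f x) / card A"
proof -
  have "(\<Sum>x\<in>S. uniform_strategy A x * f x) = (\<Sum>x\<in>A. uniform_strategy A x * f x)"
    using assms by (intro sum.mono_neutral_right) (auto simp: uniform_strategy_def)
  also have "\<dots> = (\<Sum>x\<in>A. f x) / card A"
    by (simp add: uniform_strategy_def sum_divide_distrib)
  finally show ?thesis .
qed

lemma mixed_strategy_uniform:
  assumes "A \<noteq> {}" "A \<subseteq> blotto_S N K"
  shows "mixed_strategy N K (uniform_strategy A)"
proof -
  have "finite A"
    using assms(2) finite_blotto_S finite_subset by blast
  then show ?thesis
    using assms sum_uniform_strategy[OF finite_blotto_S assms(2), of "\<lambda>_. 1"]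
    unfolding mixed_strategy_def by (auto simp: uniform_strategy_def)
qed

definition staircase :: "nat \<Rightarrow> nat \<Rightarrow> nat \<Rightarrow> nat \<Rightarrow> nat" where
  "staircase c K r k = (if k < K then c * ((k + r) mod K) else 0)"

lemma staircase_in_blotto_S:
  assumes "2 * N = c * K * (K - 1)"
  shows "staircase c K r \<in> blotto_S N K"
proof -
  have "2 * (\<Sum>m<K. m) = K * (K - 1)"
    by (induction K) (auto simp: algebra_simps)
  then have "2 * (c * (\<Sum>m<K. m)) = 2 * N"
    using assms by (metis mult.assoc mult.left_commute)
  moreover have "(\<Sum>k<K. staircase c K r k) = c * (\<Sum>m<K. m)"
    using sum_mod_shift[of "\<lambda>m. c * m" r K]
    by (simp add: staircase_def sum_distrib_left add.commute)
  ultimately show ?thesis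
    unfolding blotto_S_def by (auto simp: staircase_def)
qed

lemma inj_on_staircase:
  assumes "0 < c"
  shows "inj_on (staircase c K) {..<K}"
proof (rule inj_onI)
  fix a b assume "a \<in> {..<K}" "b \<in> {..<K}" "staircase c K a = staircase c K b"
  then have "staircase c K a 0 = staircase c K b 0" by simp
  with assms \<open>a \<in> {..<K}\<close> \<open>b \<in> {..<K}\<close> show "a = b"
    by (simp add: staircase_def)
qed

lemma staircase_total_wins:
  assumes t: "t \<in> blotto_S N K" and N: "2 * N = c * K * (K - 1)" and c: "0 < c"
  shows "real K * (real K - 1) / 2 \<le> (\<Sum>r<K. blotto_payoff 0 K (staircase c K r) t)"
proof -
  have t_total: "(\<Sum>k<K. real (t k)) = real N"
    using t unfolding blotto_S_def by (simp flip: of_nat_sum)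
  have "2 * real N = real c * (real K * (real K - 1))"
    using arg_cong[OF N, of real] by (cases K) (simp_all add: algebra_simps)
  then have N_div_c: "real N / real c = real K * (real K - 1) / 2"
    using c by (simp add: field_simps)
  have "(\<Sum>r<K. blotto_payoff 0 K (staircase c K r) t)
      = (\<Sum>k<K. \<Sum>r<K. of_bool (t k < c * ((k + r) mod K)))"
    unfolding blotto_payoff_zero by (subst sum.swap) (simp add: staircase_def)
  also have "\<dots> = (\<Sum>k<K. \<Sum>m<K. of_bool (t k < c * m))"
    by (rule sum.cong[OF refl], rule sum_mod_shift)
  also have "\<dots> = (\<Sum>k<K. real (card {m. m < K \<and> t k < c * m}))"
    by (simp add: Collect_conj_eq lessThan_def)
  also have "\<dots> \<ge> (\<Sum>k<K. real K - 1 - real (t k) / real c)"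
    using c by (intro sum_mono card_exceeding_multiples)
  also have "(\<Sum>k<K. real K - 1 - real (t k) / real c)
      = real K * (real K - 1) - (\<Sum>k<K. real (t k)) / real c"
    by (simp add: sum_subtractf sum_divide_distrib)
  finally show ?thesis
    unfolding t_total N_div_c by simp
qed

lemma staircase_mixture_dominates:
  assumes N: "2 * N = c * K * (K - 1)" and c: "0 < c"
    and few: "2 * card {k. k < K \<and> 0 < s k} < K - 1"
    and t: "t \<in> blotto_S N K"
  shows "blotto_payoff 0 K s t < (\<Sum>x\<in>blotto_S N K.
      uniform_strategy (staircase c K ` {..<K}) x * blotto_payoff 0 K x t)"
proof -
  have K: "0 < K"
    using few by simp
  have "real (2 * card {k. k < K \<and> 0 < s k}) < real (K - 1)"
    using few by (simp only: of_nat_less_iff)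
  then have few_real: "real (card {k. k < K \<and> 0 < s k}) < (real K - 1) / 2"
    using K by (simp add: of_nat_diff)
  have "staircase c K ` {..<K} \<subseteq> blotto_S N K"
    using staircase_in_blotto_S[OF N] by auto
  then have "(\<Sum>x\<in>blotto_S N K.
        uniform_strategy (staircase c K ` {..<K}) x * blotto_payoff 0 K x t)
      = (\<Sum>r<K. blotto_payoff 0 K (staircase c K r) t) / K"
    using inj_on_staircase[OF c]
    by (simp add: sum_uniform_strategy[OF finite_blotto_S] sum.reindex card_image)
  also have "\<dots> \<ge> (real K - 1) / 2"
    using staircase_total_wins[OF t N c] K by (simp add: field_simps)
  finally show ?thesis
    using blotto_payoff_zero_le_card_support[of K s t] few_real by linarith
qed

theorem nash_eq_avoids_few_battlefields:
  assumes nash: "nash_eq 0 N K pA pB" and s: "s \<in> blotto_S N K"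
    and N: "2 * N = c * K * (K - 1)" and c: "0 < c"
    and few: "2 * card {k. k < K \<and> 0 < s k} < K - 1"
  shows "pA s = 0 \<and> pB s = 0"
proof -
  let ?\<sigma> = "uniform_strategy (staircase c K ` {..<K})"
  have "mixed_strategy N K ?\<sigma>"
    using few staircase_in_blotto_S[OF N]
    by (intro mixed_strategy_uniform) (auto simp: lessThan_empty_iff)
  then show ?thesis
    using nash s staircase_mixture_dominates[OF N c few]
      best_response_avoids_strictly_dominated[of N K _ _ ?\<sigma> 0 s]
    unfolding nash_eq_def by blast
qed

theorem corollary2:
  fixes pA pB :: "(nat \<Rightarrow> nat) \<Rightarrow> real" and s :: "nat \<Rightarrow> nat"
  assumes "nash_eq 0 120 6 pA pB"
    and "s \<in> blotto_S 120 6"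
    and "card {k. k < 6 \<and> s k > 0} \<le> 2"
  shows "pA s = 0 \<and> pB s = 0"
  using nash_eq_avoids_few_battlefields[OF assms(1,2), of 8] assms(3) by simp

end
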